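(* Let $U$ be the unipotent radical of a Borel subgroup of ${\mathrm{Sp}}(4)$. Then \[\mathrm{H}(\mathcal{O}(\mathcal{C}({\mathrm{Sp}}(4)))^{U\times U};t)=\frac{1}{(1-t)(1-t^2)^2}.\]
   Context: ${\mathrm{Sp}}(4)=\{M\in\mathbb{C}^{4\times4}\mid M^TJM=J\}$ where $J$ is block diagonal with two blocks $\begin{pmatrix}0&1\\-1&0\end{pmatrix}$. The cone $\mathcal{C}({\mathrm{Sp}}(4))$ is the Zariski closure in $\mathbb{C}^{4\times4}$ of $\{cM\mid c\in\mathbb{C},M\in{\mathrm{Sp}}(4)\}$, with coordinate ring graded as a quotient of the standard graded polynomial ring by the homogeneous vanishing ideal. ${\mathrm{Sp}}(4)\times{\mathrm{Sp}}(4)$ acts by $(g,h)\cdot M=gMh^{-1}$, hence on the coordinate ring; $A^{U\times U}$ denotes the graded subalgebra of $U\times U$-invariants. The Hilbert series of $A=\bigoplus_dA_d$ is $\sum_d\dim_{\mathbb{C}}(A_d)t^d$. *)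

theory Defs
  imports "HOL-Analysis.Analysis" "HOL-Library.Function_Algebras"
    "HOL-Computational_Algebra.Formal_Power_Series"
begin

type_synonym mat4 = "complex^4^4"

text \<open>Indices of type 4 are 0,1,2,3 (standing for 1,2,3,4 of the paper).
  J is block diagonal with two blocks [[0,1],[-1,0]].\<close>
definition J4 :: mat4 where
  "J4 = (\<chi> i j. if i = 0 \<and> j = 1 then 1 else if i = 1 \<and> j = 0 then -1
             else if i = 2 \<and> j = 3 then 1 else if i = 3 \<and> j = 2 then -1 else 0)"

definition Sp4 :: "mat4 set" where
  "Sp4 = {M. transpose M ** J4 ** M = J4}"

inductive polyfun :: "(mat4 \<Rightarrow> complex) \<Rightarrow> bool" where
  pf_const: "polyfun (\<lambda>_. c)"
| pf_coord: "polyfun (\<lambda>M. M $ i $ j)"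
| pf_add: "polyfun f \<Longrightarrow> polyfun g \<Longrightarrow> polyfun (\<lambda>M. f M + g M)"
| pf_mult: "polyfun f \<Longrightarrow> polyfun g \<Longrightarrow> polyfun (\<lambda>M. f M * g M)"

inductive hpoly :: "nat \<Rightarrow> (mat4 \<Rightarrow> complex) \<Rightarrow> bool" where
  hp_const: "hpoly 0 (\<lambda>_. c)"
| hp_coord: "hpoly 1 (\<lambda>M. M $ i $ j)"
| hp_add: "hpoly d f \<Longrightarrow> hpoly d g \<Longrightarrow> hpoly d (\<lambda>M. f M + g M)"
| hp_mult: "hpoly d f \<Longrightarrow> hpoly e g \<Longrightarrow> hpoly (d + e) (\<lambda>M. f M * g M)"

definition zariski_closure :: "mat4 set \<Rightarrow> mat4 set" where
  "zariski_closure S = {x. \<forall>p. polyfun p \<longrightarrow> (\<forall>y\<in>S. p y = 0) \<longrightarrow> p x = 0}"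

definition coneSp4 :: "mat4 set" where
  "coneSp4 = zariski_closure {(\<chi> i j. c * M $ i $ j) | c M. M \<in> Sp4}"

text \<open>Unipotent radical of the Borel subgroup of Sp(4) stabilising the isotropic flag
  <e1> < <e1,e3> < <e1,e3,e4> < C^4: g e1 = e1, g e3 in e3 + <e1>,
  g e4 in e4 + <e1,e3>, g e2 in e2 + <e1,e3,e4> (column j of g is g e_j).\<close>
definition USp4 :: "mat4 set" where
  "USp4 = {g \<in> Sp4.
     g$0$0 = 1 \<and> g$1$0 = 0 \<and> g$2$0 = 0 \<and> g$3$0 = 0 \<and>
     g$1$2 = 0 \<and> g$2$2 = 1 \<and> g$3$2 = 0 \<and>
     g$1$3 = 0 \<and> g$3$3 = 1 \<and>
     g$1$1 = 1}"

text \<open>Degree d part of the coordinate ring of the cone: (S/I)_d = S_d / I_d, realised as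
  the space of restrictions to the cone of forms of degree d (extended by 0 off the cone).\<close>
definition coord_ring_deg :: "nat \<Rightarrow> (mat4 \<Rightarrow> complex) set" where
  "coord_ring_deg d = {(\<lambda>M. if M \<in> coneSp4 then f M else 0) | f. hpoly d f}"

definition inv_deg :: "nat \<Rightarrow> (mat4 \<Rightarrow> complex) set" where
  "inv_deg d = {F \<in> coord_ring_deg d. \<forall>g\<in>USp4. \<forall>h\<in>USp4. \<forall>M\<in>coneSp4.
      F (matrix_inv g ** M ** h) = F M}"

definition cdim :: "(mat4 \<Rightarrow> complex) set \<Rightarrow> nat" where
  "cdim V = vector_space.dim (\<lambda>(c::complex) (f::mat4 \<Rightarrow> complex) x. c * f x) V"

definition hilbert_series_inv :: "rat fps" where
  "hilbert_series_inv = Abs_fps (\<lambda>d. of_nat (cdim (inv_deg d)))"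

end

(*
  The invariants x (the entry M(2,1)), D (the minor of M on rows {2,4} and columns {1,3}) and
  the multiplier q (with M^T J M = q J) have degrees 1, 2, 2, and the monomials x^a D^b q^c with
  a + 2b + 2c = d form a basis of the invariants of degree d; counting them gives the series.

  The monomials are independent because x, D and q can be prescribed independently on the cone.
  Conversely, a matrix of the cone with q, x, D all nonzero is moved by U x U to a normal form whose
  entries are Laurent monomials in x, D, q, so an invariant form equals a Laurent polynomial in
  x, D, q there. Restricting the form to affine lines on which x (resp. D) is the parameter shows
  that no negative powers occur. The form and the resulting polynomial in x, D, q then agree on
  the generic locus, hence on the whole cone: a polynomial vanishing at all but finitely many
  points of an affine line vanishes on it, and lines built from symplectic transvections and
  scalings connect every matrix of the cone to the generic locus.
*)
theory Submission
  imports Defs "HOL-Computational_Algebra.Polynomial"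
begin

lemma poly_eq_if_eq_off_zero:
  fixes P Q :: "'a::{idom,ring_char_0} poly"
  assumes "\<And>s. s \<noteq> 0 \<Longrightarrow> poly P s = poly Q s"
  shows "P = Q"
proof -
  have "poly ((P - Q) * [:0,1:]) s = 0" for s
    using assms[of s] by (cases "s = 0") auto
  then have "(P - Q) * [:0,1:] = 0" using poly_all_0_iff_0 by blast
  then show ?thesis by simp
qed

lemma poly_coeffs_zero_if_vanish_off_zero:
  fixes K :: "nat \<Rightarrow> 'a::{idom,ring_char_0}"
  assumes "finite I" and "\<And>z. z \<noteq> 0 \<Longrightarrow> (\<Sum>i\<in>I. K i * z^i) = 0" and "i \<in> I"
  shows "K i = 0"
proof -
  define P where "P = (\<Sum>i\<in>I. monom (K i) i)"
  have "P = 0"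
    using assms(2) by (intro poly_eq_if_eq_off_zero) (simp add: P_def poly_sum poly_monom)
  moreover have "coeff P i = K i"
    using assms(1,3) by (simp add: P_def coeff_sum coeff_monom)
  ultimately show ?thesis by simp
qed

lemma bivariate_coeffs_zero_if_vanish_off_axes:
  fixes k :: "nat \<times> nat \<Rightarrow> 'a::{idom,ring_char_0}"
  assumes P: "finite P"
    and van: "\<And>x y. x \<noteq> 0 \<Longrightarrow> y \<noteq> 0 \<Longrightarrow> (\<Sum>(i,j)\<in>P. k (i,j) * x^i * y^j) = 0"
    and ij: "(i,j) \<in> P"
  shows "k (i,j) = 0"
proof -
  define row where "row = {j. (i,j) \<in> P}"
  have "row \<subseteq> snd ` P" by (force simp: row_def)
  then have row: "finite row" "j \<in> row"
    using P ij finite_subset by (auto simp: row_def)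
  have "(\<Sum>j\<in>row. k (i,j) * y^j) = 0" if "y \<noteq> 0" for y
    unfolding row_def
  proof (rule poly_coeffs_zero_if_vanish_off_zero[where K = "\<lambda>i. \<Sum>j\<in>{j. (i,j) \<in> P}. k (i,j) * y^j"])
    show "finite (fst ` P)" using P by simp
    show "i \<in> fst ` P" using ij by force
    fix x :: 'a assume "x \<noteq> 0"
    have "(\<Sum>i\<in>fst ` P. (\<Sum>j\<in>{j. (i,j) \<in> P}. k (i,j) * y^j) * x^i)
        = (\<Sum>i\<in>fst ` P. \<Sum>p\<in>{p\<in>P. fst p = i}. k p * x^fst p * y^snd p)"
      by (intro sum.cong refl, simp add: sum_distrib_right)
        (rule sum.reindex_bij_witness[of _ "\<lambda>p. snd p" "\<lambda>j. (_, j)"]; force simp: mult_ac)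
    also have "\<dots> = (\<Sum>(i,j)\<in>P. k (i,j) * x^i * y^j)"
      using P by (subst sum.group) (auto simp: case_prod_beta)
    finally show "(\<Sum>i\<in>fst ` P. (\<Sum>j\<in>{j. (i,j) \<in> P}. k (i,j) * y^j) * x^i) = 0"
      using van[OF \<open>x \<noteq> 0\<close> that] by simp
  qed
  then show ?thesis by (rule poly_coeffs_zero_if_vanish_off_zero[OF row(1) _ row(2)])
qed

lemma affine_times_linear_nonzero:
  fixes a k m :: "'a::{idom,ring_char_0}"
  assumes "a \<noteq> 0" "m \<noteq> 0"
  shows "\<exists>s. (a + s * k) * (s * m) \<noteq> 0"
proof (cases "a + k = 0")
  case True
  then have "(a + 2 * k) * (2 * m) = - (2 * a * m)" by (simp add: algebra_simps add_eq_0_iff)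
  then show ?thesis using assms by (metis mult_eq_0_iff neg_equal_0_iff_equal zero_neq_numeral)
next
  case False
  then show ?thesis using assms by (intro exI[of _ 1]) simp
qed

lemma laurent_neg_coeffs_zero_if_poly:
  fixes G :: "'i \<Rightarrow> 'a::{field,ring_char_0}" and A :: "'i \<Rightarrow> int"
  assumes I: "finite I" and P: "\<And>s. s \<noteq> 0 \<Longrightarrow> (\<Sum>i\<in>I. G i * s powi A i) = poly P s"
    and a: "a < 0"
  shows "(\<Sum>i\<in>{i\<in>I. A i = a}. G i) = 0"
proof -
  define E where "E = (\<Sum>i\<in>I. nat (- A i))"
  have E: "0 \<le> A i + int E" if "i \<in> I" for i
  proof -
    have "nat (- A i) \<le> E" unfolding E_def using I that by (intro member_le_sum) simp_all
    then show ?thesis by (simp add: nat_le_iff)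
  qed
  define Q where "Q = (\<Sum>i\<in>I. monom (G i) (nat (A i + int E)))"
  have "poly Q s = poly (monom 1 E * P) s" if s: "s \<noteq> 0" for s
  proof -
    have "s ^ nat (A i + int E) = s ^ E * s powi A i" if "i \<in> I" for i
      using E[OF that] s by (simp add: power_int_add flip: power_int_of_nat)
    then have "poly Q s = s ^ E * (\<Sum>i\<in>I. G i * s powi A i)"
      by (simp add: Q_def poly_sum poly_monom sum_distrib_left mult_ac cong: sum.cong)
    then show ?thesis using P[OF s] by (simp add: poly_monom)
  qed
  then have QP: "Q = monom 1 E * P" by (rule poly_eq_if_eq_off_zero)
  show ?thesis
  proof (cases "a + int E < 0")
    case True
    then have "{i\<in>I. A i = a} = {}" using E by force
    then show ?thesis by (metis sum.empty)
  next
    case False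
    have "nat (A i + int E) = nat (a + int E) \<longleftrightarrow> A i = a" if "i \<in> I" for i
      using E[OF that] False by (simp add: eq_nat_nat_iff)
    then have "coeff Q (nat (a + int E)) = (\<Sum>i\<in>I. if A i = a then G i else 0)"
      unfolding Q_def coeff_sum coeff_monom by (intro sum.cong refl) auto
    also have "\<dots> = (\<Sum>i\<in>{i\<in>I. A i = a}. G i)"
      using I by (simp add: sum.inter_filter)
    finally have "coeff Q (nat (a + int E)) = (\<Sum>i\<in>{i\<in>I. A i = a}. G i)" .
    moreover have "nat (a + int E) < E" using a False by linarith
    ultimately show ?thesis by (simp add: QP coeff_monom_mult)
  qed
qed

lemma laurent_sum_eq_nonneg_part_if_poly:
  fixes G :: "'i \<Rightarrow> 'a::{field,ring_char_0}" and A :: "'i \<Rightarrow> int"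
  assumes I: "finite I" and P: "\<And>s. s \<noteq> 0 \<Longrightarrow> (\<Sum>i\<in>I. G i * s powi A i) = poly P s"
  shows "(\<Sum>i\<in>I. G i * z powi A i) = (\<Sum>i\<in>{i\<in>I. 0 \<le> A i}. G i * z powi A i)"
proof -
  let ?neg = "{i\<in>I. A i < 0}"
  have "(\<Sum>i\<in>?neg. G i * z powi A i) = (\<Sum>a\<in>A ` ?neg. \<Sum>i\<in>{i\<in>?neg. A i = a}. G i * z powi A i)"
    using I by (intro sum.group[symmetric]) auto
  also have "\<dots> = (\<Sum>a\<in>A ` ?neg. z powi a * (\<Sum>i\<in>{i\<in>I. A i = a}. G i))"
    by (intro sum.cong refl) (auto simp: sum_distrib_left mult_ac intro!: sum.cong)
  also have "\<dots> = 0"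
    using laurent_neg_coeffs_zero_if_poly[OF I P] by (intro sum.neutral) auto
  finally have "(\<Sum>i\<in>?neg. G i * z powi A i) = 0" .
  moreover have "I = {i\<in>I. 0 \<le> A i} \<union> ?neg" and "{i\<in>I. 0 \<le> A i} \<inter> ?neg = {}" by auto
  ultimately show ?thesis using I by (metis (no_types, lifting) add_0_right finite_Un sum.union_disjoint)
qed

lemma UNIV_4_zero_based: "(UNIV::4 set) = {0,1,2,3}"
proof -
  have "(4::4) = 0" by simp
  then show ?thesis using UNIV_4 by auto
qed

lemma sum_4_zero_based: "sum f (UNIV::4 set) = f 0 + f 1 + f 2 + f 3"
  unfolding UNIV_4_zero_based by (simp add: ac_simps)

lemma forall_4_zero_based: "(\<forall>i::4. P i) \<longleftrightarrow> P 0 \<and> P 1 \<and> P 2 \<and> P 3"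
  by (metis UNIV_4_zero_based UNIV_I insert_iff singletonD)

lemma matrix_mult_4_nth:
  "(A ** B) $ i $ j = A$i$0 * B$0$j + A$i$1 * B$1$j + A$i$2 * B$2$j + A$i$3 * B$3$j"
  for A B :: mat4
  by (simp add: matrix_matrix_mult_def sum_4_zero_based)

lemma mat4_eq_iff: "A = B \<longleftrightarrow>
    A$0$0 = B$0$0 \<and> A$0$1 = B$0$1 \<and> A$0$2 = B$0$2 \<and> A$0$3 = B$0$3 \<and>
    A$1$0 = B$1$0 \<and> A$1$1 = B$1$1 \<and> A$1$2 = B$1$2 \<and> A$1$3 = B$1$3 \<and>
    A$2$0 = B$2$0 \<and> A$2$1 = B$2$1 \<and> A$2$2 = B$2$2 \<and> A$2$3 = B$2$3 \<and>
    A$3$0 = B$3$0 \<and> A$3$1 = B$3$1 \<and> A$3$2 = B$3$2 \<and> A$3$3 = B$3$3"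
  for A B :: mat4
  unfolding vec_eq_iff forall_4_zero_based by blast

lemma J4_nth: "J4 $ i $ j = (if i = 0 \<and> j = 1 then 1 else if i = 1 \<and> j = 0 then -1
    else if i = 2 \<and> j = 3 then 1 else if i = 3 \<and> j = 2 then -1 else 0)"
  by (simp add: J4_def)

lemma matrix_inv_unique: "A ** B = mat 1 \<Longrightarrow> B ** A = mat 1 \<Longrightarrow> matrix_inv A = B"
  for A B :: "'a::semiring_1^'n^'n"
  unfolding matrix_inv_def
proof (rule some_equality)
  fix A' assume AB: "A ** B = mat 1" and A': "A ** A' = mat 1 \<and> A' ** A = mat 1"
  have "A' = A' ** (A ** B)" using AB by (simp add: matrix_mul_rid)
  also have "\<dots> = B" using A' by (simp add: matrix_mul_assoc matrix_mul_lid)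
  finally show "A' = B" .
qed simp

definition mk_mat4 ::
  "complex \<Rightarrow> complex \<Rightarrow> complex \<Rightarrow> complex \<Rightarrow> complex \<Rightarrow> complex \<Rightarrow> complex \<Rightarrow> complex \<Rightarrow>
   complex \<Rightarrow> complex \<Rightarrow> complex \<Rightarrow> complex \<Rightarrow> complex \<Rightarrow> complex \<Rightarrow> complex \<Rightarrow> complex \<Rightarrow> mat4"
where
  "mk_mat4 a00 a01 a02 a03 a10 a11 a12 a13 a20 a21 a22 a23 a30 a31 a32 a33 =
    (\<chi> i j. if i = 0 then (if j = 0 then a00 else if j = 1 then a01 else if j = 2 then a02 else a03)
      else if i = 1 then (if j = 0 then a10 else if j = 1 then a11 else if j = 2 then a12 else a13)
      else if i = 2 then (if j = 0 then a20 else if j = 1 then a21 else if j = 2 then a22 else a23)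
      else (if j = 0 then a30 else if j = 1 then a31 else if j = 2 then a32 else a33))"

lemma mk_mat4_nth [simp]:
  fixes a00 a01 a02 a03 a10 a11 a12 a13 a20 a21 a22 a23 a30 a31 a32 a33 :: complex
  defines "A \<equiv> mk_mat4 a00 a01 a02 a03 a10 a11 a12 a13 a20 a21 a22 a23 a30 a31 a32 a33"
  shows "A$0$0 = a00" "A$0$1 = a01" "A$0$2 = a02" "A$0$3 = a03"
    "A$1$0 = a10" "A$1$1 = a11" "A$1$2 = a12" "A$1$3 = a13"
    "A$2$0 = a20" "A$2$1 = a21" "A$2$2 = a22" "A$2$3 = a23"
    "A$3$0 = a30" "A$3$1 = a31" "A$3$2 = a32" "A$3$3 = a33"
  by (simp_all add: A_def mk_mat4_def)

definition scale_mat :: "complex \<Rightarrow> mat4 \<Rightarrow> mat4" where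
  "scale_mat c A = (\<chi> i j. c * A$i$j)"

lemma scale_mat_one [simp]: "scale_mat 1 A = A"
  by (simp add: scale_mat_def vec_eq_iff)

lemma matrix_mult_scale_mat_right: "A ** scale_mat c B = scale_mat c (A ** B)"
  by (simp add: scale_mat_def vec_eq_iff matrix_matrix_mult_def sum_distrib_left mult.left_commute)

lemma matrix_mult_scale_mat_left: "scale_mat c B ** A = scale_mat c (B ** A)"
  by (simp add: scale_mat_def vec_eq_iff matrix_matrix_mult_def sum_distrib_left mult.assoc)

definition line :: "'a::comm_ring_1^'n^'m \<Rightarrow> 'a^'n^'m \<Rightarrow> 'a \<Rightarrow> 'a^'n^'m" where
  "line A B s = (\<chi> i j. A$i$j + s * B$i$j)"

lemma line_nth [simp]: "line A B s $ i $ j = A$i$j + s * B$i$j"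
  by (simp add: line_def)

lemma line_zero [simp]: "line A B 0 = A"
  by (simp add: vec_eq_iff)

lemma line_mat_1_mult: "line (mat 1) B s ** N = line N (B ** N) s"
  by (simp add: vec_eq_iff matrix_matrix_mult_def mat_def distrib_right sum.distrib
      sum_distrib_left mult.assoc if_distrib[of "\<lambda>x. x * _"] cong: if_cong)

definition col_form :: "mat4 \<Rightarrow> 4 \<Rightarrow> 4 \<Rightarrow> complex" where
  "col_form M i j = M$0$i * M$1$j - M$1$i * M$0$j + M$2$i * M$3$j - M$3$i * M$2$j"

lemma transpose_J4_mult_nth: "(transpose M ** J4 ** M) $ i $ j = col_form M i j"
  by (simp add: matrix_mult_4_nth J4_nth transpose_def col_form_def algebra_simps)

lemma col_form_scale_mat: "col_form (scale_mat k N) i j = k^2 * col_form N i j"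
  by (simp add: col_form_def scale_mat_def power2_eq_square algebra_simps)

definition similitude :: "complex \<Rightarrow> mat4 \<Rightarrow> bool" where
  "similitude l M \<longleftrightarrow> transpose M ** J4 ** M = scale_mat l J4"

lemma similitude_iff_col_form: "similitude l M \<longleftrightarrow> (\<forall>i j. col_form M i j = l * J4$i$j)"
  by (simp add: similitude_def vec_eq_iff transpose_J4_mult_nth scale_mat_def)

lemma similitude_iff: "similitude l M \<longleftrightarrow>
    col_form M 0 1 = l \<and> col_form M 2 3 = l \<and> col_form M 0 2 = 0 \<and> col_form M 0 3 = 0 \<and>
    col_form M 1 2 = 0 \<and> col_form M 1 3 = 0"
proof -
  have antisym: "col_form M j i = - col_form M i j" for i j
    by (simp add: col_form_def algebra_simps)
  show ?thesis
    unfolding similitude_iff_col_form forall_4_zero_based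
    by (simp add: J4_nth col_form_def[of M i i for i] antisym[of 1 0] antisym[of 2 0]
        antisym[of 3 0] antisym[of 2 1] antisym[of 3 1] antisym[of 3 2] neg_equal_iff_equal) auto
qed

lemma Sp4_iff_similitude: "M \<in> Sp4 \<longleftrightarrow> similitude 1 M"
  by (simp add: Sp4_def similitude_def)

lemma similitude_scale_mat: "similitude l M \<Longrightarrow> similitude (k^2 * l) (scale_mat k M)"
  by (simp add: similitude_iff_col_form col_form_scale_mat)

lemma col_form_mult_left: "similitude 1 g \<Longrightarrow> col_form (g ** M) i j = col_form M i j"
proof -
  assume g: "similitude 1 g"
  have "transpose (g ** M) ** J4 ** (g ** M) = transpose M ** (transpose g ** J4 ** g) ** M"
    by (simp add: matrix_transpose_mul matrix_mul_assoc)
  also have "\<dots> = transpose M ** J4 ** M" using g by (simp add: similitude_def)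
  finally show ?thesis by (metis transpose_J4_mult_nth)
qed

lemma similitude_mult_left: "similitude 1 g \<Longrightarrow> similitude l M \<Longrightarrow> similitude l (g ** M)"
  by (simp add: similitude_iff_col_form col_form_mult_left)

lemma similitude_mult_right: "similitude l M \<Longrightarrow> similitude 1 h \<Longrightarrow> similitude l (M ** h)"
proof -
  assume M: "similitude l M" and h: "similitude 1 h"
  have "transpose (M ** h) ** J4 ** (M ** h) = transpose h ** (transpose M ** J4 ** M) ** h"
    by (simp add: matrix_transpose_mul matrix_mul_assoc)
  also have "\<dots> = scale_mat l (transpose h ** J4 ** h)"
    using M by (simp add: similitude_def matrix_mult_scale_mat_right matrix_mult_scale_mat_left
        matrix_mul_assoc)
  also have "\<dots> = scale_mat l J4" using h by (simp add: similitude_def)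
  finally show ?thesis unfolding similitude_def .
qed

definition normal_mat :: "complex \<Rightarrow> complex \<Rightarrow> complex \<Rightarrow> complex \<Rightarrow> mat4" where
  "normal_mat a b g h = mk_mat4 0 b 0 0  a 0 0 0  0 0 0 h  0 0 g 0"

lemma normal_mat_nth [simp]:
  "normal_mat a b g h $ 0 $ 0 = 0" "normal_mat a b g h $ 0 $ 1 = b"
  "normal_mat a b g h $ 0 $ 2 = 0" "normal_mat a b g h $ 0 $ 3 = 0"
  "normal_mat a b g h $ 1 $ 0 = a" "normal_mat a b g h $ 1 $ 1 = 0"
  "normal_mat a b g h $ 1 $ 2 = 0" "normal_mat a b g h $ 1 $ 3 = 0"
  "normal_mat a b g h $ 2 $ 0 = 0" "normal_mat a b g h $ 2 $ 1 = 0"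
  "normal_mat a b g h $ 2 $ 2 = 0" "normal_mat a b g h $ 2 $ 3 = h"
  "normal_mat a b g h $ 3 $ 0 = 0" "normal_mat a b g h $ 3 $ 1 = 0"
  "normal_mat a b g h $ 3 $ 2 = g" "normal_mat a b g h $ 3 $ 3 = 0"
  by (simp_all add: normal_mat_def)

lemma similitude_normal_mat: "g * h = a * b \<Longrightarrow> similitude (- (a * b)) (normal_mat a b g h)"
  unfolding similitude_iff col_form_def by simp

text \<open>The symplectic transvection \<open>v \<mapsto> v + s \<omega>(u,v) u\<close>.\<close>

definition transvection_dir :: "(4 \<Rightarrow> complex) \<Rightarrow> mat4" where
  "transvection_dir u = (\<chi> i j. u i * (\<Sum>k\<in>UNIV. u k * J4$k$j))"

definition transvection :: "(4 \<Rightarrow> complex) \<Rightarrow> complex \<Rightarrow> mat4" where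
  "transvection u s = line (mat 1) (transvection_dir u) s"

lemma similitude_transvection: "similitude 1 (transvection u s)"
  unfolding similitude_iff col_form_def transvection_def transvection_dir_def
  by (simp add: sum_4_zero_based J4_nth mat_def algebra_simps)

lemma transvection_mult: "transvection u s ** N = line N (transvection_dir u ** N) s"
  unfolding transvection_def by (rule line_mat_1_mult)

lemma transvection_dir_mult_nth:
  "(transvection_dir u ** N) $ i $ j = u i * (u 0 * N$1$j - u 1 * N$0$j + u 2 * N$3$j - u 3 * N$2$j)"
  for N :: mat4
  unfolding matrix_mult_4_nth
  by (simp add: transvection_dir_def sum_4_zero_based J4_nth algebra_simps)

text \<open>The entries \<open>$2$1\<close> and \<open>$3$1\<close> of \<open>unip\<close> are forced by the symplectic relations
  between its columns.\<close>

definition unip :: "complex \<Rightarrow> complex \<Rightarrow> complex \<Rightarrow> complex \<Rightarrow> mat4" where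
  "unip t1 t2 t3 p = mk_mat4 1 p t1 t3  0 1 0 0  0 (t3 - t1*t2) 1 t2  0 (-t1) 0 1"

lemma unip_nth [simp]:
  "unip t1 t2 t3 p $ 0 $ 0 = 1" "unip t1 t2 t3 p $ 0 $ 1 = p"
  "unip t1 t2 t3 p $ 0 $ 2 = t1" "unip t1 t2 t3 p $ 0 $ 3 = t3"
  "unip t1 t2 t3 p $ 1 $ 0 = 0" "unip t1 t2 t3 p $ 1 $ 1 = 1"
  "unip t1 t2 t3 p $ 1 $ 2 = 0" "unip t1 t2 t3 p $ 1 $ 3 = 0"
  "unip t1 t2 t3 p $ 2 $ 0 = 0" "unip t1 t2 t3 p $ 2 $ 1 = t3 - t1*t2"
  "unip t1 t2 t3 p $ 2 $ 2 = 1" "unip t1 t2 t3 p $ 2 $ 3 = t2"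
  "unip t1 t2 t3 p $ 3 $ 0 = 0" "unip t1 t2 t3 p $ 3 $ 1 = -t1"
  "unip t1 t2 t3 p $ 3 $ 2 = 0" "unip t1 t2 t3 p $ 3 $ 3 = 1"
  by (simp_all add: unip_def)

lemma similitude_unip: "similitude 1 (unip t1 t2 t3 p)"
  unfolding similitude_iff col_form_def by (simp add: algebra_simps)

lemma unip_zero: "unip 0 0 0 0 = mat 1"
  by (simp add: mat4_eq_iff mat_def)

lemma similitude_unip_mult: "similitude l M \<Longrightarrow> similitude l (unip t1 t2 t3 p ** M ** unip s1 s2 s3 r)"
  by (intro similitude_mult_right similitude_mult_left similitude_unip)

lemma unip_in_USp4: "unip t1 t2 t3 p \<in> USp4"
  using similitude_unip by (simp add: USp4_def Sp4_iff_similitude)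

lemma USp4_eq_unip:
  assumes "g \<in> USp4"
  shows "g = unip (g$0$2) (g$2$3) (g$0$3) (g$0$1)"
proof -
  have entries: "g$0$0 = 1" "g$1$0 = 0" "g$2$0 = 0" "g$3$0 = 0" "g$1$2 = 0" "g$2$2 = 1"
    "g$3$2 = 0" "g$1$3 = 0" "g$3$3 = 1" "g$1$1 = 1"
    using assms by (auto simp: USp4_def)
  have "col_form g 1 2 = 0" "col_form g 1 3 = 0"
    using assms by (auto simp: USp4_def Sp4_iff_similitude similitude_iff)
  then have "g$3$1 = - g$0$2" and "g$2$1 - g$3$1 * g$2$3 = g$0$3"
    using entries by (simp_all add: col_form_def algebra_simps)
  then have "g$3$1 = - g$0$2" "g$2$1 = g$0$3 - g$0$2 * g$2$3"
    by (simp_all add: algebra_simps)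
  then show ?thesis by (simp add: mat4_eq_iff entries)
qed

lemma matrix_inv_unip: "matrix_inv (unip t1 t2 t3 p) = unip (-t1) (-t2) (t1*t2 - t3) (-p)"
  by (rule matrix_inv_unique)
    (simp_all add: mat4_eq_iff matrix_mult_4_nth mat_def algebra_simps)

text \<open>In the paper's \<open>1\<close>-based indexing, \<open>x\<close> is the \<open>(2,1)\<close> entry, \<open>D\<close> the minor on
  rows \<open>{2,4}\<close> and columns \<open>{1,3}\<close>, and \<open>q\<close> the multiplier of the similitude.\<close>

definition inv_x :: "mat4 \<Rightarrow> complex" where
  "inv_x M = M$1$0"

definition inv_D :: "mat4 \<Rightarrow> complex" where
  "inv_D M = M$1$0 * M$3$2 - M$1$2 * M$3$0"

definition inv_q :: "mat4 \<Rightarrow> complex" where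
  "inv_q M = col_form M 0 1"

lemma inv_x_unip_mult: "inv_x (unip t1 t2 t3 p ** M ** unip s1 s2 s3 r) = inv_x M"
  by (simp add: inv_x_def matrix_mult_4_nth)

lemma inv_D_unip_mult: "inv_D (unip t1 t2 t3 p ** M ** unip s1 s2 s3 r) = inv_D M"
  by (simp add: inv_D_def matrix_mult_4_nth algebra_simps)

lemma inv_q_unip_mult:
  assumes "col_form M 0 2 = 0" "col_form M 0 3 = 0"
  shows "inv_q (unip t1 t2 t3 p ** M ** unip s1 s2 s3 r) = inv_q M"
proof -
  have "col_form (N ** unip s1 s2 s3 r) 0 1
      = col_form N 0 1 + (s3 - s1 * s2) * col_form N 0 2 - s1 * col_form N 0 3" for N :: mat4
    by (simp add: col_form_def matrix_mult_4_nth algebra_simps)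
  then show ?thesis
    using assms by (simp add: inv_q_def col_form_mult_left[OF similitude_unip] matrix_mul_assoc[symmetric])
qed

lemma similitude_multiplier: "similitude l M \<Longrightarrow> inv_q M = l"
  by (simp add: similitude_iff inv_q_def)

lemma hpoly_polyfun: "hpoly d f \<Longrightarrow> polyfun f"
  by (induction rule: hpoly.induct) (auto intro: polyfun.intros)

lemma polyfun_scale: "polyfun f \<Longrightarrow> polyfun (\<lambda>M. c * f M)"
  using pf_mult[OF pf_const] by blast

lemma polyfun_diff: "polyfun f \<Longrightarrow> polyfun g \<Longrightarrow> polyfun (\<lambda>M. f M - g M)"
  using pf_add[OF _ polyfun_scale[of g "-1"], of f] by simp

lemma polyfun_sum: "finite S \<Longrightarrow> (\<And>i. i \<in> S \<Longrightarrow> polyfun (f i)) \<Longrightarrow> polyfun (\<lambda>M. \<Sum>i\<in>S. f i M)"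
  by (induction S rule: finite_induct) (auto intro: pf_add pf_const[of 0, simplified])

lemma polyfun_mult_left_right: "polyfun p \<Longrightarrow> polyfun (\<lambda>M. p (A ** M ** B))"
proof (induction rule: polyfun.induct)
  case (pf_coord i j)
  show ?case
    unfolding matrix_mult_4_nth by (intro pf_add pf_mult pf_const polyfun.pf_coord)
qed (auto intro: polyfun.intros)

lemma hpoly_mult_eq: "hpoly d f \<Longrightarrow> hpoly e g \<Longrightarrow> n = d + e \<Longrightarrow> hpoly n (\<lambda>M. f M * g M)"
  using hp_mult by blast

lemma hpoly_scale: "hpoly d f \<Longrightarrow> hpoly d (\<lambda>M. c * f M)"
  using hpoly_mult_eq[OF hp_const] by simp

lemma hpoly_diff: "hpoly d f \<Longrightarrow> hpoly d g \<Longrightarrow> hpoly d (\<lambda>M. f M - g M)"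
  using hp_add[OF _ hpoly_scale[of d g "-1"], of f] by simp

lemma hpoly_power: "hpoly d f \<Longrightarrow> hpoly (n * d) (\<lambda>M. f M ^ n)"
  by (induction n) (auto intro: hpoly_mult_eq hp_const[of 1, simplified])

lemma polyfun_on_line: "polyfun p \<Longrightarrow> \<exists>P. \<forall>s. p (line A B s) = poly P s"
proof (induction rule: polyfun.induct)
  case (pf_const c)
  have "\<forall>s. c = poly [:c:] s" by simp
  then show ?case by blast
next
  case (pf_coord i j)
  have "\<forall>s. line A B s $ i $ j = poly [:A$i$j, B$i$j:] s" by simp
  then show ?case by blast
next
  case (pf_add f g)
  then obtain P Q where "\<forall>s. f (line A B s) = poly P s" "\<forall>s. g (line A B s) = poly Q s" by blast
  then have "\<forall>s. f (line A B s) + g (line A B s) = poly (P + Q) s" by simp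
  then show ?case by blast
next
  case (pf_mult f g)
  then obtain P Q where "\<forall>s. f (line A B s) = poly P s" "\<forall>s. g (line A B s) = poly Q s" by blast
  then have "\<forall>s. f (line A B s) * g (line A B s) = poly (P * Q) s" by simp
  then show ?case by blast
qed

lemma polyfun_zero_if_zero_on_line:
  assumes p: "polyfun p" and Q: "Q \<noteq> 0" and van: "\<And>s. poly Q s \<noteq> 0 \<Longrightarrow> p (line N B s) = 0"
  shows "p N = 0"
proof -
  obtain P where P: "\<forall>s. p (line N B s) = poly P s" using polyfun_on_line[OF p] by blast
  have "poly (P * Q) s = 0" for s using van[of s] P by (cases "poly Q s = 0") auto
  then have "P = 0" using Q poly_all_0_iff_0 by (metis mult_eq_0_iff)
  then show ?thesis using P line_zero by (metis poly_0)
qed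

lemma polyfun_zero_if_zero_on_line_off_zero:
  "polyfun p \<Longrightarrow> (\<And>s. s \<noteq> 0 \<Longrightarrow> p (line N B s) = 0) \<Longrightarrow> p N = 0"
  by (rule polyfun_zero_if_zero_on_line[of p "[:0,1:]"]) auto

lemma zariski_closure_mult_closed:
  assumes "\<And>M. M \<in> S \<Longrightarrow> A ** M ** B \<in> S" and "N \<in> zariski_closure S"
  shows "A ** N ** B \<in> zariski_closure S"
  unfolding zariski_closure_def
proof (intro CollectI allI impI)
  fix p assume "polyfun p" "\<forall>y\<in>S. p y = 0"
  then have "polyfun (\<lambda>M. p (A ** M ** B))" "\<forall>y\<in>S. p (A ** y ** B) = 0"
    using assms(1) polyfun_mult_left_right by auto
  then show "p (A ** N ** B) = 0"
    using assms(2) unfolding zariski_closure_def by blast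
qed

definition scaled_Sp4 :: "mat4 set" where
  "scaled_Sp4 = {scale_mat c M | c M. M \<in> Sp4}"

lemma coneSp4_eq: "coneSp4 = zariski_closure scaled_Sp4"
  unfolding coneSp4_def scaled_Sp4_def scale_mat_def by simp

lemma polyfun_vanish_on_cone:
  "N \<in> coneSp4 \<Longrightarrow> polyfun p \<Longrightarrow> (\<And>M. M \<in> scaled_Sp4 \<Longrightarrow> p M = 0) \<Longrightarrow> p N = 0"
  unfolding coneSp4_eq zariski_closure_def by blast

lemma scaled_Sp4_similitude: "N \<in> scaled_Sp4 \<Longrightarrow> \<exists>l. similitude l N"
  unfolding scaled_Sp4_def Sp4_iff_similitude using similitude_scale_mat by fastforce

lemma similitude_in_scaled_Sp4:
  assumes "similitude l N" "l \<noteq> 0"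
  shows "N \<in> scaled_Sp4"
proof -
  define c where "c = csqrt l"
  have c: "c \<noteq> 0" "c^2 = l" using assms(2) by (auto simp: c_def)
  have "similitude ((1/c)^2 * l) (scale_mat (1/c) N)"
    using assms(1) by (rule similitude_scale_mat)
  then have "scale_mat (1/c) N \<in> Sp4"
    using c assms(2) by (simp add: Sp4_iff_similitude power_divide)
  moreover have "N = scale_mat c (scale_mat (1/c) N)"
    using c by (simp add: scale_mat_def vec_eq_iff)
  ultimately show ?thesis unfolding scaled_Sp4_def by blast
qed

lemma similitude_in_cone: "similitude l N \<Longrightarrow> l \<noteq> 0 \<Longrightarrow> N \<in> coneSp4"
  using similitude_in_scaled_Sp4 unfolding coneSp4_eq zariski_closure_def by blast

lemma cone_col_form_zero:
  assumes "N \<in> coneSp4"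
  shows "col_form N 0 2 = 0" "col_form N 0 3 = 0"
proof -
  have "polyfun (\<lambda>M. col_form M i j)" for i j
    unfolding col_form_def by (intro polyfun_diff pf_add pf_mult pf_coord)
  moreover have "M \<in> scaled_Sp4 \<Longrightarrow> col_form M 0 2 = 0 \<and> col_form M 0 3 = 0" for M
    using scaled_Sp4_similitude similitude_iff by blast
  ultimately show "col_form N 0 2 = 0" "col_form N 0 3 = 0"
    using polyfun_vanish_on_cone[OF assms] by blast+
qed

lemma unip_mult_cone: "N \<in> coneSp4 \<Longrightarrow> unip t1 t2 t3 p ** N ** unip s1 s2 s3 r \<in> coneSp4"
proof (unfold coneSp4_eq, erule zariski_closure_mult_closed[rotated])
  fix M assume "M \<in> scaled_Sp4"
  then obtain k M0 where "M = scale_mat k M0" "similitude 1 M0"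
    unfolding scaled_Sp4_def Sp4_iff_similitude by blast
  then have "unip t1 t2 t3 p ** M ** unip s1 s2 s3 r = scale_mat k (unip t1 t2 t3 p ** M0 ** unip s1 s2 s3 r)"
    "similitude 1 (unip t1 t2 t3 p ** M0 ** unip s1 s2 s3 r)"
    by (simp_all add: matrix_mult_scale_mat_right matrix_mult_scale_mat_left similitude_unip_mult)
  then show "unip t1 t2 t3 p ** M ** unip s1 s2 s3 r \<in> scaled_Sp4"
    unfolding scaled_Sp4_def Sp4_iff_similitude by blast
qed

definition unip_invariant :: "(mat4 \<Rightarrow> complex) \<Rightarrow> bool" where
  "unip_invariant F \<longleftrightarrow> (\<forall>M\<in>coneSp4. \<forall>t1 t2 t3 p s1 s2 s3 r.
      F (unip t1 t2 t3 p ** M ** unip s1 s2 s3 r) = F M)"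

lemma inv_deg_eq: "inv_deg d = {F \<in> coord_ring_deg d. unip_invariant F}"
proof -
  have "(\<forall>g\<in>USp4. \<forall>h\<in>USp4. \<forall>M\<in>coneSp4. F (matrix_inv g ** M ** h) = F M) \<longleftrightarrow> unip_invariant F"
    for F
  proof
    assume inv: "\<forall>g\<in>USp4. \<forall>h\<in>USp4. \<forall>M\<in>coneSp4. F (matrix_inv g ** M ** h) = F M"
    have "matrix_inv (unip (-t1) (-t2) (t1*t2 - t3) (-p)) = unip t1 t2 t3 p" for t1 t2 t3 p
      by (simp add: matrix_inv_unip)
    then show "unip_invariant F"
      unfolding unip_invariant_def using inv unip_in_USp4 by metis
  next
    assume "unip_invariant F"
    then show "\<forall>g\<in>USp4. \<forall>h\<in>USp4. \<forall>M\<in>coneSp4. F (matrix_inv g ** M ** h) = F M"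
      unfolding unip_invariant_def by (metis USp4_eq_unip matrix_inv_unip)
  qed
  then show ?thesis by (simp add: inv_deg_def)
qed

lemma unip_invariantD:
  "unip_invariant F \<Longrightarrow> M \<in> coneSp4 \<Longrightarrow> F (unip t1 t2 t3 p ** M ** unip s1 s2 s3 r) = F M"
  by (simp add: unip_invariant_def)

lemma unip_invariant_left:
  "unip_invariant F \<Longrightarrow> M \<in> coneSp4 \<Longrightarrow> F (unip t1 t2 t3 p ** M) = F M"
  using unip_invariantD[of F M t1 t2 t3 p 0 0 0 0] by (simp add: unip_zero matrix_mul_rid)

lemma unip_invariant_right:
  "unip_invariant F \<Longrightarrow> M \<in> coneSp4 \<Longrightarrow> F (M ** unip s1 s2 s3 r) = F M"
  using unip_invariantD[of F M 0 0 0 0 s1 s2 s3 r] by (simp add: unip_zero matrix_mul_lid)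

definition cone_restrict :: "(mat4 \<Rightarrow> complex) \<Rightarrow> mat4 \<Rightarrow> complex" where
  "cone_restrict f M = (if M \<in> coneSp4 then f M else 0)"

lemma coord_ring_deg_eq: "coord_ring_deg d = cone_restrict ` {f. hpoly d f}"
  by (auto simp: coord_ring_deg_def cone_restrict_def[abs_def])

lemma cone_restrict_in_inv_deg:
  assumes "hpoly d f"
    and "\<And>M t1 t2 t3 p s1 s2 s3 r. M \<in> coneSp4 \<Longrightarrow> f (unip t1 t2 t3 p ** M ** unip s1 s2 s3 r) = f M"
  shows "cone_restrict f \<in> inv_deg d"
  using assms unip_mult_cone
  by (auto simp: inv_deg_eq coord_ring_deg_eq unip_invariant_def cone_restrict_def)

section \<open>Independence of the invariant monomials\<close>

definition inv_monomial :: "nat \<Rightarrow> nat \<Rightarrow> nat \<Rightarrow> mat4 \<Rightarrow> complex" where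
  "inv_monomial a b c M = inv_x M ^ a * inv_D M ^ b * inv_q M ^ c"

lemma hpoly_inv_monomial: "hpoly (a + 2*b + 2*c) (inv_monomial a b c)"
proof -
  have coord2: "hpoly 2 (\<lambda>M. M$i$j * M$k$l)" for i j k l
    by (rule hpoly_mult_eq[OF hp_coord hp_coord]) simp
  have x: "hpoly 1 inv_x" and D: "hpoly 2 inv_D" and q: "hpoly 2 inv_q"
    unfolding inv_x_def inv_D_def inv_q_def col_form_def
    by (intro hp_coord hpoly_diff hp_add coord2)+
  have "hpoly (a*1) (\<lambda>M. inv_x M ^ a)" "hpoly (b*2) (\<lambda>M. inv_D M ^ b)"
    "hpoly (c*2) (\<lambda>M. inv_q M ^ c)"
    by (rule hpoly_power[OF x] hpoly_power[OF D] hpoly_power[OF q])+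
  then show ?thesis
    unfolding inv_monomial_def by (intro hpoly_mult_eq) (auto simp: mult.commute)
qed

lemma inv_monomial_unip_mult:
  "M \<in> coneSp4 \<Longrightarrow> inv_monomial a b c (unip t1 t2 t3 p ** M ** unip s1 s2 s3 r) = inv_monomial a b c M"
  by (simp add: inv_monomial_def inv_x_unip_mult inv_D_unip_mult inv_q_unip_mult cone_col_form_zero)

lemma inv_monomial_in_inv_deg: "cone_restrict (inv_monomial a b c) \<in> inv_deg (a + 2*b + 2*c)"
  by (rule cone_restrict_in_inv_deg[OF hpoly_inv_monomial inv_monomial_unip_mult])

lemma inv_monomial_normal_mat:
  "inv_monomial i j k (normal_mat a b g h) = a ^ i * (a * g) ^ j * (- (a * b)) ^ k"
  by (simp add: inv_monomial_def inv_x_def inv_D_def inv_q_def col_form_def)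

definition test_point :: "complex \<Rightarrow> complex \<Rightarrow> mat4" where
  "test_point D l = normal_mat 1 (-l) D (-l/D)"

lemma inv_monomial_test_point:
  assumes "D \<noteq> 0" "l \<noteq> 0"
  shows "cone_restrict (inv_monomial a b c) (test_point D l) = D^b * l^c"
proof -
  have "test_point D l \<in> coneSp4"
    using similitude_normal_mat[of D "-l/D" 1 "-l"] assms
    by (auto simp: test_point_def intro: similitude_in_cone)
  then show ?thesis by (simp add: cone_restrict_def inv_monomial_normal_mat test_point_def)
qed

lemma sum_fun_apply: "(\<Sum>i\<in>A. f i) x = (\<Sum>i\<in>A. f i x)"
  by (induction A rule: infinite_finite_induct) auto

interpretation fun_vs: vector_space "\<lambda>(c::complex) (f::mat4 \<Rightarrow> complex) x. c * f x"
  by unfold_locales (simp_all add: fun_eq_iff algebra_simps)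

definition weight_pairs :: "nat \<Rightarrow> (nat \<times> nat) set" where
  "weight_pairs d = {(b,c). 2*b + 2*c \<le> d}"

definition monomial_basis_fun :: "nat \<Rightarrow> nat \<times> nat \<Rightarrow> mat4 \<Rightarrow> complex" where
  "monomial_basis_fun d = (\<lambda>(b,c). cone_restrict (inv_monomial (d - 2*b - 2*c) b c))"

definition monomial_basis :: "nat \<Rightarrow> (mat4 \<Rightarrow> complex) set" where
  "monomial_basis d = monomial_basis_fun d ` weight_pairs d"

lemma weight_pairs_eq: "weight_pairs d = {(b,c). b + c \<le> d div 2}"
  unfolding weight_pairs_def by auto

lemma finite_weight_pairs: "finite (weight_pairs d)"
  unfolding weight_pairs_eq by (rule finite_subset[of _ "{..d} \<times> {..d}"]) auto

definition triangular :: "nat \<Rightarrow> nat" where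
  "triangular m = (\<Sum>k\<le>m. k + 1)"

lemma card_weight_pairs: "card (weight_pairs d) = triangular (d div 2)"
proof -
  have "card (weight_pairs d) = (\<Sum>(b,c)\<in>{(b,c). b + c \<le> d div 2}. 1::nat)"
    by (simp add: weight_pairs_eq)
  also have "\<dots> = (\<Sum>k\<le>d div 2. \<Sum>i\<le>k. 1)"
    by (rule sum.triangle_reindex_eq)
  finally show ?thesis by (simp add: triangular_def)
qed

lemma monomial_basis_subset_inv_deg: "monomial_basis d \<subseteq> inv_deg d"
proof
  fix F assume "F \<in> monomial_basis d"
  then obtain b c where bc: "2*b + 2*c \<le> d" and F: "F = monomial_basis_fun d (b,c)"
    by (auto simp: monomial_basis_def weight_pairs_def)
  have "d - 2*b - 2*c + 2*b + 2*c = d" using bc by simp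
  then show "F \<in> inv_deg d"
    using inv_monomial_in_inv_deg[of "d - 2*b - 2*c" b c] by (simp add: F monomial_basis_fun_def)
qed

lemma monomial_basis_fun_test_point:
  "D \<noteq> 0 \<Longrightarrow> l \<noteq> 0 \<Longrightarrow> monomial_basis_fun d (b,c) (test_point D l) = D^b * l^c"
  by (simp add: monomial_basis_fun_def inv_monomial_test_point)

lemma inj_on_monomial_basis_fun: "inj_on (monomial_basis_fun d) (weight_pairs d)"
proof (rule inj_onI, clarify)
  fix b c b' c' assume eq: "monomial_basis_fun d (b,c) = monomial_basis_fun d (b',c')"
  have "(2::complex)^b = 2^b'" "(2::complex)^c = 2^c'"
    using fun_cong[OF eq, of "test_point 2 1"] fun_cong[OF eq, of "test_point 1 2"]
    by (simp_all add: monomial_basis_fun_test_point)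
  then have "of_nat (2^b) = (of_nat (2^b') :: complex)" "of_nat (2^c) = (of_nat (2^c') :: complex)"
    by simp_all
  then show "b = b' \<and> c = c'"
    by (simp only: of_nat_eq_iff) simp
qed

lemma card_monomial_basis: "card (monomial_basis d) = triangular (d div 2)"
  unfolding monomial_basis_def card_image[OF inj_on_monomial_basis_fun] card_weight_pairs ..

lemma monomial_basis_independent: "fun_vs.independent (monomial_basis d)"
proof (rule fun_vs.independent_if_scalars_zero)
  show "finite (monomial_basis d)"
    unfolding monomial_basis_def using finite_weight_pairs by blast
  fix u F
  assume comb: "(\<Sum>G\<in>monomial_basis d. (\<lambda>M. u G * G M)) = 0" and F: "F \<in> monomial_basis d"
  have "(\<Sum>(b,c)\<in>weight_pairs d. u (monomial_basis_fun d (b,c)) * D^b * l^c) = 0"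
    if "D \<noteq> 0" "l \<noteq> 0" for D l
  proof -
    have "(\<Sum>G\<in>monomial_basis d. u G * G (test_point D l)) = 0"
      using fun_cong[OF comb, of "test_point D l"] by (simp add: sum_fun_apply)
    moreover have "monomial_basis_fun d p (test_point D l) = D ^ fst p * l ^ snd p" for p
      using monomial_basis_fun_test_point[OF that, of d "fst p" "snd p"] by simp
    ultimately show ?thesis
      unfolding monomial_basis_def sum.reindex[OF inj_on_monomial_basis_fun]
      by (simp add: case_prod_beta mult.assoc)
  qed
  with finite_weight_pairs F show "u F = 0"
    unfolding monomial_basis_def
    by (auto dest: bivariate_coeffs_zero_if_vanish_off_axes[where k = "\<lambda>p. u (monomial_basis_fun d p)"])
qed

section \<open>A normal form for generic matrices of the cone\<close>

lemma reduce_column_0: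
  fixes N :: mat4
  assumes "N$1$0 \<noteq> 0"
  defines "M \<equiv> unip (N$3$0 / N$1$0) 0 (- N$2$0 / N$1$0) (- N$0$0 / N$1$0) ** N"
  shows "M$0$0 = 0" "M$1$0 = N$1$0" "M$2$0 = 0" "M$3$0 = 0"
  using assms(1) unfolding M_def by (simp_all add: matrix_mult_4_nth field_simps)

lemma reduce_column_2:
  assumes M: "similitude l M" and col0: "M$0$0 = 0" "M$1$0 = x" "M$2$0 = 0" "M$3$0 = 0"
    and x: "x \<noteq> 0" and y: "M$3$2 \<noteq> 0"
  defines "M' \<equiv> unip 0 (- M$2$2 / M$3$2) 0 0 ** M ** unip (- M$1$2 / x) 0 0 0"
  shows "M'$0$0 = 0" "M'$1$0 = x" "M'$2$0 = 0" "M'$3$0 = 0"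
    "M'$0$2 = 0" "M'$1$2 = 0" "M'$2$2 = 0" "M'$3$2 = M$3$2"
proof -
  have "col_form M 0 2 = 0" using M by (simp add: similitude_iff)
  then have "M$0$2 = 0" using col0 x by (simp add: col_form_def)
  then show "M'$0$0 = 0" "M'$1$0 = x" "M'$2$0 = 0" "M'$3$0 = 0"
    "M'$0$2 = 0" "M'$1$2 = 0" "M'$2$2 = 0" "M'$3$2 = M$3$2"
    using col0 x y by (simp_all add: M'_def matrix_mult_4_nth field_simps)
qed

lemma reduce_columns_1_3:
  assumes M: "similitude l M" and l: "l \<noteq> 0"
    and col0: "M$0$0 = 0" "M$1$0 = x" "M$2$0 = 0" "M$3$0 = 0" and x: "x \<noteq> 0"
    and col2: "M$0$2 = 0" "M$1$2 = 0" "M$2$2 = 0" "M$3$2 = y" and y: "y \<noteq> 0"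
  shows "M ** unip 0 (- M$3$3 / y) (- M$1$3 / x) (- M$1$1 / x) = normal_mat x (- l / x) y (- l / y)"
proof -
  have form: "col_form M 0 1 = l" "col_form M 2 3 = l" "col_form M 0 3 = 0"
    "col_form M 1 2 = 0" "col_form M 1 3 = 0"
    using M by (simp_all add: similitude_iff)
  have m03: "M$0$3 = 0" using form(3) col0 x by (simp add: col_form_def)
  have "- (y * M$2$3) = l" using form(2) col2 m03 by (simp add: col_form_def)
  then have m23: "M$2$3 = - l / y" using y by (simp add: field_simps minus_equation_iff)
  have "- (x * M$0$1) = l" using form(1) col0 by (simp add: col_form_def)
  then have m01: "M$0$1 = - l / x" using x by (simp add: field_simps minus_equation_iff)
  have m21: "M$2$1 = 0" using form(4) col0 col2 y by (simp add: col_form_def)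
  have "M$0$1 * M$1$3 - M$3$1 * M$2$3 = 0" using form(5) m03 m21 by (simp add: col_form_def)
  then have "l * (x * M$3$1 - y * M$1$3) = 0" using m01 m23 x y by (simp add: field_simps)
  then have m31: "M$3$1 = M$1$3 * y / x" using l x by (simp add: field_simps)
  show ?thesis
    using col0 col2 x y m03 m23 m01 m21 m31 by (simp add: mat4_eq_iff matrix_mult_4_nth field_simps)
qed

definition generic :: "mat4 \<Rightarrow> bool" where
  "generic N \<longleftrightarrow> similitude (inv_q N) N \<and> inv_q N \<noteq> 0 \<and> inv_x N \<noteq> 0 \<and> inv_D N \<noteq> 0"

lemma genericI: "similitude l N \<Longrightarrow> l \<noteq> 0 \<Longrightarrow> inv_x N \<noteq> 0 \<Longrightarrow> inv_D N \<noteq> 0 \<Longrightarrow> generic N"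
  using similitude_multiplier by (auto simp: generic_def)

definition normal_point :: "complex \<Rightarrow> complex \<Rightarrow> complex \<Rightarrow> mat4" where
  "normal_point x D l = normal_mat x (- l / x) (D / x) (- l / (D / x))"

lemma unip_invariant_normal_point:
  assumes F: "unip_invariant F" and N: "generic N"
  shows "F N = F (normal_point (inv_x N) (inv_D N) (inv_q N))"
proof -
  define l where "l = inv_q N"
  define y where "y = inv_D N / inv_x N"
  have N': "similitude l N" and l: "l \<noteq> 0" and x: "inv_x N \<noteq> 0" and y0: "y \<noteq> 0"
    using N by (simp_all add: generic_def l_def y_def)
  define M1 where "M1 = unip (N$3$0 / N$1$0) 0 (- N$2$0 / N$1$0) (- N$0$0 / N$1$0) ** N"
  have col0: "M1$0$0 = 0" "M1$1$0 = inv_x N" "M1$2$0 = 0" "M1$3$0 = 0"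
    using reduce_column_0[of N] x unfolding M1_def inv_x_def by simp_all
  have M1: "similitude l M1" "F M1 = F N"
    unfolding M1_def using similitude_unip_mult[OF N', of _ _ _ _ 0 0 0 0]
    by (simp_all add: unip_zero matrix_mul_rid unip_invariant_left[OF F similitude_in_cone[OF N' l]])
  have "inv_D M1 = inv_D N"
    using inv_D_unip_mult[of _ _ _ _ N 0 0 0 0] by (simp add: M1_def unip_zero matrix_mul_rid)
  then have y1: "M1$3$2 = y" using col0 x by (simp add: y_def inv_D_def field_simps)
  define M2 where "M2 = unip 0 (- M1$2$2 / y) 0 0 ** M1 ** unip (- M1$1$2 / inv_x N) 0 0 0"
  note cols = reduce_column_2[OF M1(1) col0 x, unfolded y1, OF y0, folded M2_def]
  have M2: "similitude l M2" "F M2 = F M1"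
    unfolding M2_def using similitude_unip_mult[OF M1(1)] M1(1) l
    by (simp_all add: unip_invariantD[OF F] similitude_in_cone)
  have "F M2 = F (normal_mat (inv_x N) (- l / inv_x N) y (- l / y))"
    using reduce_columns_1_3[OF M2(1) l cols(1-4) x cols(5-7) _ y0] cols(8) y1
      unip_invariant_right[OF F similitude_in_cone[OF M2(1) l]] by metis
  then show ?thesis using M1(2) M2(2) by (simp add: normal_point_def l_def y_def)
qed

lemma normal_point_in_cone: "x \<noteq> 0 \<Longrightarrow> D \<noteq> 0 \<Longrightarrow> l \<noteq> 0 \<Longrightarrow> normal_point x D l \<in> coneSp4"
  using similitude_normal_mat[of "D / x" "- l / (D / x)" x "- l / x"]
  by (auto simp: normal_point_def intro: similitude_in_cone)

section \<open>Density of the generic locus\<close>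

definition vanishes_generically :: "(mat4 \<Rightarrow> complex) \<Rightarrow> bool" where
  "vanishes_generically p \<longleftrightarrow> (\<forall>N. generic N \<longrightarrow> p N = 0)"

lemma vanishes_generically_transvection:
  assumes p: "polyfun p" and gen: "vanishes_generically p" and N: "similitude l N" "l \<noteq> 0"
    and s0: "inv_x (transvection u s0 ** N) * inv_D (transvection u s0 ** N) \<noteq> 0"
  shows "p N = 0"
proof -
  have "polyfun (\<lambda>M. inv_x M * inv_D M)"
    unfolding inv_x_def inv_D_def by (intro pf_mult polyfun_diff pf_coord)
  then obtain Q where Q: "\<forall>s. inv_x (line N (transvection_dir u ** N) s) *
      inv_D (line N (transvection_dir u ** N) s) = poly Q s"
    using polyfun_on_line by blast
  show ?thesis
  proof (rule polyfun_zero_if_zero_on_line[OF p])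
    show "Q \<noteq> 0" using Q s0 by (auto simp: transvection_mult)
    fix s assume "poly Q s \<noteq> 0"
    then have "inv_x (line N (transvection_dir u ** N) s) \<noteq> 0"
      "inv_D (line N (transvection_dir u ** N) s) \<noteq> 0"
      using Q by (metis mult_zero_left, metis mult_zero_right)
    moreover have "similitude l (line N (transvection_dir u ** N) s)"
      using similitude_mult_left[OF similitude_transvection N(1)] by (simp add: transvection_mult)
    ultimately show "p (line N (transvection_dir u ** N) s) = 0"
      using gen N(2) genericI unfolding vanishes_generically_def by blast
  qed
qed

text \<open>With \<open>a\<close>, \<open>b\<close>, \<open>c\<close> the columns \<open>0\<close>, \<open>2\<close>, \<open>3\<close> of a similitude, the three expressions are
  the rates of change of \<open>inv_D\<close> along the transvections in the directions \<open>e\<^sub>3\<close>, \<open>e\<^sub>1\<close>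
  and \<open>e\<^sub>1 + e\<^sub>3\<close> (zero-based).\<close>

lemma degenerate_minor_cases:
  fixes a0 a1 a2 a3 b0 b1 b2 b3 c0 c1 c2 c3 l :: "'a::idom"
  assumes a1: "a1 \<noteq> 0" and minor: "a1 * b3 - b1 * a3 = 0"
    and form_bc: "b0 * c1 - b1 * c0 + b2 * c3 - b3 * c2 = l" and l: "l \<noteq> 0"
    and form_ac: "a0 * c1 - a1 * c0 + a2 * c3 - a3 * c2 = 0"
  shows "a2 * b1 - a1 * b2 \<noteq> 0 \<or> a3 * b0 - a0 * b3 \<noteq> 0 \<or>
      - ((b0 + b2) * (a1 - a3)) - (a0 + a2) * (b3 - b1) \<noteq> 0"
proof (rule ccontr)
  assume "\<not> ?thesis"
  then have h1: "a1 * b2 - a2 * b1 = 0" and h2: "a3 * b0 - a0 * b3 = 0"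
    and h3: "- ((b0 + b2) * (a1 - a3)) - (a0 + a2) * (b3 - b1) = 0"
    by (auto simp: algebra_simps)
  have k3: "a1 * b3 - a3 * b1 = 0" using minor by (simp add: algebra_simps)
  have k0: "a1 * b0 - a0 * b1 = 0"
  proof (cases "a3 = 0")
    case True
    then have "b3 = 0" using minor a1 by simp
    then have "- (a1 * b0 - a0 * b1) - (a1 * b2 - a2 * b1) = 0"
      using h3 True by (simp add: algebra_simps)
    then show ?thesis using h1 by simp
  next
    case False
    have "a3 * (a1 * b0 - a0 * b1) = a1 * (a3 * b0 - a0 * b3) + a0 * (a1 * b3 - a3 * b1)"
      by (simp add: algebra_simps)
    then show ?thesis using h2 k3 False by simp
  qed
  have "a1 * l - b1 * 0 = c1 * (a1 * b0 - a0 * b1) + c3 * (a1 * b2 - a2 * b1) - c2 * (a1 * b3 - a3 * b1)"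
    unfolding form_bc[symmetric] form_ac[symmetric] by (simp add: algebra_simps)
  then show False using a1 l h1 k0 k3 by simp
qed

lemma transvection_separates_degenerate_minor:
  assumes N: "similitude l N" "l \<noteq> 0" and x: "inv_x N \<noteq> 0" and D: "inv_D N = 0"
  shows "\<exists>u s. inv_x (transvection u s ** N) * inv_D (transvection u s ** N) \<noteq> 0"
proof -
  have along: "\<exists>u s. inv_x (transvection u s ** N) * inv_D (transvection u s ** N) \<noteq> 0"
    if xs: "\<And>s. inv_x (transvection u s ** N) = N$1$0 + s * k"
      and Ds: "\<And>s. inv_D (transvection u s ** N) = s * m" and m: "m \<noteq> 0" for u k m
  proof -
    obtain s where "(N$1$0 + s * k) * (s * m) \<noteq> 0"
      using affine_times_linear_nonzero[of "N$1$0" m k] x m by (auto simp: inv_x_def)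
    then show ?thesis using xs Ds by metis
  qed
  have form: "col_form N 2 3 = l" "col_form N 0 3 = 0" using N(1) by (simp_all add: similitude_iff)
  have minor: "N$1$0 * N$3$2 - N$1$2 * N$3$0 = 0" using D by (simp add: inv_D_def)
  have "N$2$0 * N$1$2 - N$1$0 * N$2$2 \<noteq> 0 \<or> N$3$0 * N$0$2 - N$0$0 * N$3$2 \<noteq> 0 \<or>
      - ((N$0$2 + N$2$2) * (N$1$0 - N$3$0)) - (N$0$0 + N$2$0) * (N$3$2 - N$1$2) \<noteq> 0"
    by (rule degenerate_minor_cases[OF _ minor _ N(2)])
      (use x form in \<open>simp_all add: inv_x_def col_form_def\<close>)
  then show ?thesis
  proof (elim disjE)
    assume "N$2$0 * N$1$2 - N$1$0 * N$2$2 \<noteq> 0"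
    then show ?thesis
      by (intro along[of "indicator {3}" 0 "N$2$0 * N$1$2 - N$1$0 * N$2$2"])
        (use minor in \<open>simp_all add: transvection_mult inv_x_def inv_D_def transvection_dir_mult_nth algebra_simps\<close>)
  next
    assume "N$3$0 * N$0$2 - N$0$0 * N$3$2 \<noteq> 0"
    then show ?thesis
      by (intro along[of "indicator {1}" "- N$0$0" "N$3$0 * N$0$2 - N$0$0 * N$3$2"])
        (use minor in \<open>simp_all add: transvection_mult inv_x_def inv_D_def transvection_dir_mult_nth algebra_simps\<close>)
  next
    assume "- ((N$0$2 + N$2$2) * (N$1$0 - N$3$0)) - (N$0$0 + N$2$0) * (N$3$2 - N$1$2) \<noteq> 0"
    then show ?thesis
      by (intro along[of "indicator {1,3}" "- (N$0$0 + N$2$0)"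
          "- ((N$0$2 + N$2$2) * (N$1$0 - N$3$0)) - (N$0$0 + N$2$0) * (N$3$2 - N$1$2)"])
        (use minor in \<open>simp_all add: transvection_mult inv_x_def inv_D_def transvection_dir_mult_nth algebra_simps\<close>)
  qed
qed

lemma vanishes_generically_x_nonzero:
  assumes p: "polyfun p" and gen: "vanishes_generically p"
    and N: "similitude l N" "l \<noteq> 0" and x: "inv_x N \<noteq> 0"
  shows "p N = 0"
proof (cases "inv_D N = 0")
  case True
  then obtain u s where "inv_x (transvection u s ** N) * inv_D (transvection u s ** N) \<noteq> 0"
    using transvection_separates_degenerate_minor[OF N x] by blast
  then show ?thesis by (rule vanishes_generically_transvection[OF p gen N])
next
  case False
  then show ?thesis using gen N x genericI unfolding vanishes_generically_def by blast
qed

lemma transvection_moves_x: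
  assumes N: "similitude l N" "l \<noteq> 0" and x: "inv_x N = 0"
  shows "\<exists>u k. k \<noteq> 0 \<and> (\<forall>s. inv_x (transvection u s ** N) = s * k)"
proof -
  have x_line: "inv_x (transvection u s ** N) = s * u 1 * (u 0 * N$1$0 - u 1 * N$0$0 + u 2 * N$3$0 - u 3 * N$2$0)"
    for u s using x by (simp add: transvection_mult inv_x_def transvection_dir_mult_nth)
  have "col_form N 0 1 = l" using N(1) by (simp add: similitude_iff)
  then have "N$0$0 * N$1$1 + N$2$0 * N$3$1 - N$3$0 * N$2$1 = l"
    using x by (simp add: col_form_def inv_x_def)
  then consider "N$0$0 \<noteq> 0" | "N$0$0 = 0" "N$3$0 \<noteq> 0" | "N$0$0 = 0" "N$3$0 = 0" "N$2$0 \<noteq> 0"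
    using N(2) by force
  then show ?thesis
  proof cases
    case 1
    then show ?thesis using x_line[of "indicator {1}"] x by (intro exI[of _ "indicator {1}"] exI[of _ "- N$0$0"]) (auto simp: inv_x_def)
  next
    case 2
    then show ?thesis using x_line[of "indicator {1,2}"] x by (intro exI[of _ "indicator {1,2}"] exI[of _ "N$3$0"]) (auto simp: inv_x_def)
  next
    case 3
    then show ?thesis using x_line[of "indicator {1,3}"] x by (intro exI[of _ "indicator {1,3}"] exI[of _ "- N$2$0"]) (auto simp: inv_x_def)
  qed
qed

lemma vanishes_generically_similitude:
  assumes p: "polyfun p" and gen: "vanishes_generically p" and N: "similitude l N" "l \<noteq> 0"
  shows "p N = 0"
proof (cases "inv_x N = 0")
  case True
  then obtain u k where k: "k \<noteq> 0" and xs: "\<And>s. inv_x (transvection u s ** N) = s * k"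
    using transvection_moves_x[OF N] by blast
  show ?thesis
  proof (rule polyfun_zero_if_zero_on_line_off_zero[OF p])
    fix s :: complex assume "s \<noteq> 0"
    then have "p (transvection u s ** N) = 0"
      using vanishes_generically_x_nonzero[OF p gen similitude_mult_left[OF similitude_transvection N(1)] N(2)]
        xs k by simp
    then show "p (line N (transvection_dir u ** N) s) = 0" by (simp add: transvection_mult)
  qed
next
  case False
  then show ?thesis by (rule vanishes_generically_x_nonzero[OF p gen N])
qed

lemma vanishes_generically_cone:
  assumes p: "polyfun p" and gen: "vanishes_generically p" and M: "M \<in> coneSp4"
  shows "p M = 0"
proof (rule polyfun_vanish_on_cone[OF M p])
  fix N assume "N \<in> scaled_Sp4"
  then obtain c M0 where N: "N = scale_mat c M0" and M0: "similitude 1 M0"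
    unfolding scaled_Sp4_def Sp4_iff_similitude by blast
  have scaled: "p (scale_mat c M0) = 0" if "c \<noteq> 0" for c
    using vanishes_generically_similitude[OF p gen similitude_scale_mat[OF M0]] that by simp
  have "line (scale_mat 0 M0) M0 s = scale_mat s M0" for s
    by (simp add: vec_eq_iff scale_mat_def)
  then have "p (scale_mat 0 M0) = 0"
    using polyfun_zero_if_zero_on_line_off_zero[OF p, of "scale_mat 0 M0" M0] scaled by simp
  then show "p N = 0" using scaled N by (cases "c = 0") auto
qed

section \<open>Every invariant is a polynomial in x, D, q\<close>

type_synonym laurent_term = "complex \<times> int \<times> int \<times> nat"

definition lterm_val :: "laurent_term \<Rightarrow> complex \<Rightarrow> complex \<Rightarrow> complex \<Rightarrow> complex" where
  "lterm_val t x D l = (case t of (c, a, b, k) \<Rightarrow> c * x powi a * D powi b * l ^ k)"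

definition lterm_weight :: "laurent_term \<Rightarrow> int" where
  "lterm_weight t = (case t of (c, a, b, k) \<Rightarrow> a + 2 * b + 2 * int k)"

definition lterm_mult :: "laurent_term \<Rightarrow> laurent_term \<Rightarrow> laurent_term" where
  "lterm_mult t t' =
    (case t of (c, a, b, k) \<Rightarrow> case t' of (c', a', b', k') \<Rightarrow> (c * c', a + a', b + b', k + k'))"

lemma lterm_val_mult:
  "x \<noteq> 0 \<Longrightarrow> D \<noteq> 0 \<Longrightarrow> lterm_val (lterm_mult t t') x D l = lterm_val t x D l * lterm_val t' x D l"
  by (cases t; cases t') (simp add: lterm_val_def lterm_mult_def power_int_add power_add mult_ac)

lemma lterm_weight_mult: "lterm_weight (lterm_mult t t') = lterm_weight t + lterm_weight t'"
  by (cases t; cases t') (simp add: lterm_weight_def lterm_mult_def)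

lemma sum_list_lterm_products:
  assumes "x \<noteq> 0" "D \<noteq> 0"
  shows "(\<Sum>t\<leftarrow>[lterm_mult t1 t2. t1 \<leftarrow> L1, t2 \<leftarrow> L2]. lterm_val t x D l)
    = (\<Sum>t\<leftarrow>L1. lterm_val t x D l) * (\<Sum>t\<leftarrow>L2. lterm_val t x D l)"
  by (induction L1)
    (simp_all add: lterm_val_mult[OF assms] sum_list_const_mult o_def algebra_simps)

definition normal_point_terms :: "4 \<Rightarrow> 4 \<Rightarrow> laurent_term list" where
  "normal_point_terms i j =
    (if i = 1 \<and> j = 0 then [(1, 1, 0, 0)] else if i = 0 \<and> j = 1 then [(-1, -1, 0, 1)]
     else if i = 3 \<and> j = 2 then [(1, -1, 1, 0)] else if i = 2 \<and> j = 3 then [(-1, 1, -1, 1)]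
     else [])"

lemma normal_point_nth:
  assumes "x \<noteq> 0" "D \<noteq> 0"
  shows "normal_point x D l $ i $ j = (\<Sum>t\<leftarrow>normal_point_terms i j. lterm_val t x D l)"
proof -
  have "\<forall>i j. normal_point x D l $ i $ j = (\<Sum>t\<leftarrow>normal_point_terms i j. lterm_val t x D l)"
    unfolding forall_4_zero_based using assms
    by (simp add: normal_point_def normal_point_terms_def lterm_val_def power_int_minus
        field_simps)
  then show ?thesis by blast
qed

lemma normal_point_terms_weight: "t \<in> set (normal_point_terms i j) \<Longrightarrow> lterm_weight t = 1"
  by (auto simp: normal_point_terms_def lterm_weight_def split: if_splits)

lemma hpoly_normal_point_expansion:
  "hpoly d f \<Longrightarrow> \<exists>L. (\<forall>t\<in>set L. lterm_weight t = int d) \<and>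
    (\<forall>x D l. x \<noteq> 0 \<longrightarrow> D \<noteq> 0 \<longrightarrow> f (normal_point x D l) = (\<Sum>t\<leftarrow>L. lterm_val t x D l))"
proof (induction rule: hpoly.induct)
  case (hp_const c)
  show ?case by (intro exI[of _ "[(c, 0, 0, 0)]"]) (simp add: lterm_val_def lterm_weight_def)
next
  case (hp_coord i j)
  show ?case
    by (intro exI[of _ "normal_point_terms i j"]) (simp add: normal_point_nth normal_point_terms_weight)
next
  case (hp_add d f g)
  then obtain L1 L2 where "\<forall>t\<in>set L1. lterm_weight t = int d" "\<forall>t\<in>set L2. lterm_weight t = int d"
    "\<forall>x D l. x \<noteq> 0 \<longrightarrow> D \<noteq> 0 \<longrightarrow> f (normal_point x D l) = (\<Sum>t\<leftarrow>L1. lterm_val t x D l)"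
    "\<forall>x D l. x \<noteq> 0 \<longrightarrow> D \<noteq> 0 \<longrightarrow> g (normal_point x D l) = (\<Sum>t\<leftarrow>L2. lterm_val t x D l)"
    by blast
  then show ?case by (intro exI[of _ "L1 @ L2"]) auto
next
  case (hp_mult d f e g)
  then obtain L1 L2 where "\<forall>t\<in>set L1. lterm_weight t = int d" "\<forall>t\<in>set L2. lterm_weight t = int e"
    "\<forall>x D l. x \<noteq> 0 \<longrightarrow> D \<noteq> 0 \<longrightarrow> f (normal_point x D l) = (\<Sum>t\<leftarrow>L1. lterm_val t x D l)"
    "\<forall>x D l. x \<noteq> 0 \<longrightarrow> D \<noteq> 0 \<longrightarrow> g (normal_point x D l) = (\<Sum>t\<leftarrow>L2. lterm_val t x D l)"
    by blast
  then show ?case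
    by (intro exI[of _ "[lterm_mult t1 t2. t1 \<leftarrow> L1, t2 \<leftarrow> L2]"])
      (auto simp: sum_list_lterm_products lterm_weight_mult)
qed

lemma invariant_generic_expansion:
  assumes f: "hpoly d f" and F: "unip_invariant (cone_restrict f)"
  obtains I :: "nat set" and A B C cc where "finite I"
    "\<And>i. i \<in> I \<Longrightarrow> A i + 2 * B i + 2 * int (C i) = int d"
    "\<And>N. generic N \<Longrightarrow> f N = (\<Sum>i\<in>I. cc i * inv_x N powi A i * inv_D N powi B i * inv_q N ^ C i)"
proof -
  obtain L where weight: "\<forall>t\<in>set L. lterm_weight t = int d" and expansion:
    "\<And>x D l. x \<noteq> 0 \<Longrightarrow> D \<noteq> 0 \<Longrightarrow> f (normal_point x D l) = (\<Sum>t\<leftarrow>L. lterm_val t x D l)"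
    using hpoly_normal_point_expansion[OF f] by blast
  define cc A B C where "cc i = fst (L!i)" and "A i = fst (snd (L!i))"
    and "B i = fst (snd (snd (L!i)))" and "C i = snd (snd (snd (L!i)))" for i
  have val: "lterm_val (L!i) x D l = cc i * x powi A i * D powi B i * l ^ C i" for i x D l
    by (simp add: cc_def A_def B_def C_def lterm_val_def split: prod.split)
  have "lterm_weight (L!i) = A i + 2 * B i + 2 * int (C i)" for i
    by (simp add: A_def B_def C_def lterm_weight_def split: prod.split)
  then have "A i + 2 * B i + 2 * int (C i) = int d" if "i \<in> {..<length L}" for i
    using weight that by (metis lessThan_iff nth_mem)
  moreover have "f N = (\<Sum>i\<in>{..<length L}. cc i * inv_x N powi A i * inv_D N powi B i * inv_q N ^ C i)"
    if N: "generic N" for N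
  proof -
    have "f N = f (normal_point (inv_x N) (inv_D N) (inv_q N))"
      using unip_invariant_normal_point[OF F N] N
        normal_point_in_cone[of "inv_x N" "inv_D N" "inv_q N"] similitude_in_cone[of "inv_q N" N]
      by (simp add: cone_restrict_def generic_def)
    then show ?thesis
      using N expansion by (simp add: generic_def sum_list_sum_nth atLeast0LessThan val)
  qed
  ultimately show ?thesis using that[of "{..<length L}"] by blast
qed

text \<open>Affine lines of generic matrices on which \<open>inv_x\<close> (resp. \<open>inv_D\<close>) is the parameter
  while the other two invariants stay fixed: a polynomial function restricted to them is a
  polynomial in that parameter, which excludes negative powers of it.\<close>

definition x_curve :: "complex \<Rightarrow> complex \<Rightarrow> complex \<Rightarrow> mat4" where
  "x_curve D l = line (mk_mat4 0 0 0 (l/D)  0 0 (-D) 0  0 (-l) 0 0  1 0 0 0)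
                      (mk_mat4 0 0 0 0  1 0 0 0  0 0 0 (-l/D)  0 0 0 0)"

definition D_curve :: "complex \<Rightarrow> complex \<Rightarrow> complex \<Rightarrow> mat4" where
  "D_curve x l = line (mk_mat4 0 (-l/x) 0 0  x 0 0 0  0 0 1 0  0 0 0 l)
                      (mk_mat4 0 0 0 0  0 0 0 0  0 0 0 0  0 0 (1/x) 0)"

lemma x_curve_generic:
  assumes "D \<noteq> 0" "l \<noteq> 0" "s \<noteq> 0"
  shows "generic (x_curve D l s)" "inv_x (x_curve D l s) = s" "inv_D (x_curve D l s) = D"
    "inv_q (x_curve D l s) = l"
proof -
  show x: "inv_x (x_curve D l s) = s" and D: "inv_D (x_curve D l s) = D"
    and q: "inv_q (x_curve D l s) = l"
    using assms by (simp_all add: x_curve_def inv_x_def inv_D_def inv_q_def col_form_def)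
  have "similitude l (x_curve D l s)"
    using assms by (simp add: x_curve_def similitude_iff col_form_def)
  then show "generic (x_curve D l s)" using assms x D by (intro genericI[of l]) auto
qed

lemma D_curve_generic:
  assumes "x \<noteq> 0" "l \<noteq> 0" "s \<noteq> 0"
  shows "generic (D_curve x l s)" "inv_x (D_curve x l s) = x" "inv_D (D_curve x l s) = s"
    "inv_q (D_curve x l s) = l"
proof -
  show x: "inv_x (D_curve x l s) = x" and D: "inv_D (D_curve x l s) = s"
    and q: "inv_q (D_curve x l s) = l"
    using assms by (simp_all add: D_curve_def inv_x_def inv_D_def inv_q_def col_form_def)
  have "similitude l (D_curve x l s)"
    using assms by (simp add: D_curve_def similitude_iff col_form_def)
  then show "generic (D_curve x l s)" using assms x D by (intro genericI[of l]) auto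
qed

lemma generic_expansion_nonneg_x:
  assumes f: "polyfun f" and I: "finite I"
    and exp: "\<And>N. generic N \<Longrightarrow> f N = (\<Sum>i\<in>I. cc i * inv_x N powi A i * inv_D N powi B i * inv_q N ^ C i)"
    and N: "generic N"
  shows "f N = (\<Sum>i\<in>{i\<in>I. 0 \<le> A i}. cc i * inv_x N powi A i * inv_D N powi B i * inv_q N ^ C i)"
proof -
  define G where "G i = cc i * inv_D N powi B i * inv_q N ^ C i" for i
  have D: "inv_D N \<noteq> 0" and l: "inv_q N \<noteq> 0" using N by (auto simp: generic_def)
  obtain P where P: "\<forall>s. f (x_curve (inv_D N) (inv_q N) s) = poly P s"
    using polyfun_on_line[OF f] unfolding x_curve_def by blast
  have "(\<Sum>i\<in>I. G i * s powi A i) = poly P s" if "s \<noteq> 0" for s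
    using exp[OF x_curve_generic(1)[OF D l that]] x_curve_generic(2-4)[OF D l that] P
    by (simp add: G_def mult_ac)
  then have "(\<Sum>i\<in>I. G i * inv_x N powi A i) = (\<Sum>i\<in>{i\<in>I. 0 \<le> A i}. G i * inv_x N powi A i)"
    by (rule laurent_sum_eq_nonneg_part_if_poly[OF I])
  then show ?thesis using exp[OF N] by (simp add: G_def mult_ac)
qed

lemma generic_expansion_nonneg_D:
  assumes f: "polyfun f" and I: "finite I"
    and exp: "\<And>N. generic N \<Longrightarrow> f N = (\<Sum>i\<in>I. cc i * inv_x N powi A i * inv_D N powi B i * inv_q N ^ C i)"
    and N: "generic N"
  shows "f N = (\<Sum>i\<in>{i\<in>I. 0 \<le> B i}. cc i * inv_x N powi A i * inv_D N powi B i * inv_q N ^ C i)"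
proof -
  define G where "G i = cc i * inv_x N powi A i * inv_q N ^ C i" for i
  have x: "inv_x N \<noteq> 0" and l: "inv_q N \<noteq> 0" using N by (auto simp: generic_def)
  obtain P where P: "\<forall>s. f (D_curve (inv_x N) (inv_q N) s) = poly P s"
    using polyfun_on_line[OF f] unfolding D_curve_def by blast
  have "(\<Sum>i\<in>I. G i * s powi B i) = poly P s" if "s \<noteq> 0" for s
    using exp[OF D_curve_generic(1)[OF x l that]] D_curve_generic(2-4)[OF x l that] P
    by (simp add: G_def mult_ac)
  then have "(\<Sum>i\<in>I. G i * inv_D N powi B i) = (\<Sum>i\<in>{i\<in>I. 0 \<le> B i}. G i * inv_D N powi B i)"
    by (rule laurent_sum_eq_nonneg_part_if_poly[OF I])
  then show ?thesis using exp[OF N] by (simp add: G_def mult_ac)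
qed

lemma invariant_monomial_combination:
  assumes "F \<in> inv_deg d"
  obtains J :: "nat set" and a b c cc where "finite J" "\<And>i. i \<in> J \<Longrightarrow> a i + 2 * b i + 2 * c i = d"
    "F = (\<lambda>M. \<Sum>i\<in>J. cc i * cone_restrict (inv_monomial (a i) (b i) (c i)) M)"
proof -
  obtain f where f: "hpoly d f" and F: "F = cone_restrict f" and inv: "unip_invariant F"
    using assms unfolding inv_deg_eq coord_ring_deg_eq by blast
  obtain I :: "nat set" and A B C cc where I: "finite I" and weight: "\<And>i. i \<in> I \<Longrightarrow> A i + 2 * B i + 2 * int (C i) = int d"
    and exp: "\<And>N. generic N \<Longrightarrow> f N = (\<Sum>i\<in>I. cc i * inv_x N powi A i * inv_D N powi B i * inv_q N ^ C i)"
    using invariant_generic_expansion[OF f inv[unfolded F]] by blast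
  have pf: "polyfun f" using f by (rule hpoly_polyfun)
  define J where "J = {i\<in>{i\<in>I. 0 \<le> A i}. 0 \<le> B i}"
  define q where "q M = (\<Sum>i\<in>J. cc i * inv_monomial (nat (A i)) (nat (B i)) (C i) M)" for M
  have J: "finite J" using I by (simp add: J_def)
  have "f N - q N = 0" if "generic N" for N
  proof -
    have "f N = (\<Sum>i\<in>J. cc i * inv_x N powi A i * inv_D N powi B i * inv_q N ^ C i)"
      unfolding J_def using I that
      by (intro generic_expansion_nonneg_D[OF pf] generic_expansion_nonneg_x[OF pf I exp]) simp_all
    also have "\<dots> = q N"
      unfolding q_def inv_monomial_def
      by (intro sum.cong refl) (simp add: J_def power_int_def)
    finally show ?thesis by simp
  qed
  moreover have "polyfun (\<lambda>M. f M - q M)"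
    unfolding q_def
    by (intro polyfun_diff pf polyfun_sum J polyfun_scale hpoly_polyfun[OF hpoly_inv_monomial])
  ultimately have "f M = q M" if "M \<in> coneSp4" for M
    using vanishes_generically_cone[of "\<lambda>M. f M - q M" M] that
    by (simp add: vanishes_generically_def)
  then have "F = (\<lambda>M. \<Sum>i\<in>J. cc i * cone_restrict (inv_monomial (nat (A i)) (nat (B i)) (C i)) M)"
    by (auto simp: F cone_restrict_def q_def)
  moreover have "nat (A i) + 2 * nat (B i) + 2 * C i = d" if "i \<in> J" for i
    using weight[of i] that by (simp add: J_def) linarith
  ultimately show ?thesis by (rule that[OF J, rotated])
qed

lemma inv_deg_subset_span: "inv_deg d \<subseteq> fun_vs.span (monomial_basis d)"
proof
  fix F assume "F \<in> inv_deg d"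
  then obtain J :: "nat set" and a b c cc where J: "finite J" and weight: "\<And>i. i \<in> J \<Longrightarrow> a i + 2 * b i + 2 * c i = d"
    and F: "F = (\<lambda>M. \<Sum>i\<in>J. cc i * cone_restrict (inv_monomial (a i) (b i) (c i)) M)"
    using invariant_monomial_combination by blast
  have "(\<lambda>M. cc i * cone_restrict (inv_monomial (a i) (b i) (c i)) M) \<in> fun_vs.span (monomial_basis d)"
    if "i \<in> J" for i
  proof (intro fun_vs.span_scale fun_vs.span_base)
    have "a i = d - 2 * b i - 2 * c i" "(b i, c i) \<in> weight_pairs d"
      using weight[OF that] by (auto simp: weight_pairs_def)
    then show "cone_restrict (inv_monomial (a i) (b i) (c i)) \<in> monomial_basis d"
      unfolding monomial_basis_def by (intro image_eqI[of _ _ "(b i, c i)"]) (simp_all add: monomial_basis_fun_def)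
  qed
  then have "(\<Sum>i\<in>J. (\<lambda>M. cc i * cone_restrict (inv_monomial (a i) (b i) (c i)) M))
      \<in> fun_vs.span (monomial_basis d)"
    by (rule fun_vs.span_sum)
  moreover have "F = (\<Sum>i\<in>J. (\<lambda>M. cc i * cone_restrict (inv_monomial (a i) (b i) (c i)) M))"
    unfolding F by (rule ext) (simp add: sum_fun_apply)
  ultimately show "F \<in> fun_vs.span (monomial_basis d)" by simp
qed

lemma cdim_inv_deg: "cdim (inv_deg d) = triangular (d div 2)"
proof -
  have "card (monomial_basis d) = fun_vs.dim (inv_deg d)"
    using monomial_basis_subset_inv_deg inv_deg_subset_span monomial_basis_independent
    by (rule fun_vs.basis_card_eq_dim)
  then show ?thesis by (simp add: cdim_def card_monomial_basis)
qed

section \<open>The Hilbert series\<close>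

lemma fps_one_minus_X_power_mult_nth:
  "fps_nth ((1 - fps_X ^ k) * f) n = fps_nth f n - (if n < k then 0 else fps_nth f (n - k))"
  for f :: "'a::comm_ring_1 fps"
  by (simp add: algebra_simps fps_X_power_mult_right_nth)

lemma triangular_Suc: "triangular (Suc m) = triangular m + (m + 2)"
  by (simp add: triangular_def)

lemma fps_one_minus_X_mult_triangular:
  "(1 - fps_X) * Abs_fps (\<lambda>d. of_nat (triangular (d div 2)) :: 'a::comm_ring_1)
    = Abs_fps (\<lambda>d. if even d then of_nat (d div 2 + 1) else 0)"
proof (rule fps_ext)
  fix n :: nat
  have nth: "fps_nth ((1 - fps_X) * f) k = fps_nth f k - (if k = 0 then 0 else fps_nth f (k - 1))"
    for f :: "'a fps" and k
    using fps_one_minus_X_power_mult_nth[of 1 f k] by simp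
  consider "n = 0" | j where "n = 2 * j + 1" | j where "n = 2 * j + 2"
    by (metis add_2_eq_Suc' oddE evenE not0_implies_Suc odd_Suc_div_two Suc_eq_plus1)
  then show "fps_nth ((1 - fps_X) * Abs_fps (\<lambda>d. of_nat (triangular (d div 2)) :: 'a)) n =
      fps_nth (Abs_fps (\<lambda>d. if even d then of_nat (d div 2 + 1) else 0)) n"
  proof cases
    case 1
    then show ?thesis by (simp add: nth triangular_def)
  next
    case (2 j)
    then show ?thesis by (simp add: nth)
  next
    case (3 j)
    then have "n = 2 * Suc j" "n - 1 = 2 * j + 1" by simp_all
    then show ?thesis by (simp add: nth triangular_Suc)
  qed
qed

lemma fps_one_minus_X2_mult_even_linear:
  "(1 - fps_X^2) * Abs_fps (\<lambda>d. if even d then of_nat (d div 2 + 1) else 0 :: 'a::comm_ring_1)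
    = Abs_fps (\<lambda>d. if even d then 1 else 0)"
proof (rule fps_ext)
  fix n
  show "fps_nth ((1 - fps_X^2) * Abs_fps (\<lambda>d. if even d then of_nat (d div 2 + 1) else 0 :: 'a)) n =
      fps_nth (Abs_fps (\<lambda>d. if even d then 1 else 0)) n"
  proof (cases "n < 2")
    case True
    then show ?thesis by (auto simp: fps_one_minus_X_power_mult_nth less_2_cases_iff)
  next
    case False
    then obtain m where "n = Suc (Suc m)" by (metis add_2_eq_Suc le_Suc_ex not_less)
    then show ?thesis
      by (cases "even m") (auto simp: fps_one_minus_X_power_mult_nth elim!: evenE oddE)
  qed
qed

lemma fps_one_minus_X2_mult_even_indicator:
  "(1 - fps_X^2) * Abs_fps (\<lambda>d. if even d then 1 else 0 :: 'a::comm_ring_1) = 1"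
proof (rule fps_ext)
  fix n
  show "fps_nth ((1 - fps_X^2) * Abs_fps (\<lambda>d. if even d then 1 else 0 :: 'a)) n = fps_nth 1 n"
  proof (cases "n < 2")
    case True
    then show ?thesis by (auto simp: fps_one_minus_X_power_mult_nth less_2_cases_iff)
  next
    case False
    then obtain m where "n = Suc (Suc m)" by (metis add_2_eq_Suc le_Suc_ex not_less)
    then show ?thesis by (simp add: fps_one_minus_X_power_mult_nth)
  qed
qed

lemma fps_inverse_triangular:
  "inverse ((1 - fps_X) * (1 - fps_X ^ 2) ^ 2) = Abs_fps (\<lambda>d. of_nat (triangular (d div 2)) :: 'a::field)"
proof (rule fps_inverse_unique)
  let ?T = "Abs_fps (\<lambda>d. of_nat (triangular (d div 2)) :: 'a)"
  have "(1 - fps_X) * (1 - fps_X ^ 2) ^ 2 * ?T = (1 - fps_X^2) * ((1 - fps_X^2) * ((1 - fps_X) * ?T))"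
    by (simp add: power2_eq_square mult_ac)
  also have "\<dots> = 1"
    by (simp only: fps_one_minus_X_mult_triangular fps_one_minus_X2_mult_even_linear
        fps_one_minus_X2_mult_even_indicator)
  finally show "(1 - fps_X) * (1 - fps_X ^ 2) ^ 2 * ?T = 1" .
qed

theorem proposition5p3:
  shows "hilbert_series_inv = inverse ((1 - fps_X) * (1 - fps_X ^ 2) ^ 2)"
proof -
  have "hilbert_series_inv = Abs_fps (\<lambda>d. of_nat (triangular (d div 2)))"
    by (simp add: hilbert_series_inv_def cdim_inv_deg)
  also have "\<dots> = inverse ((1 - fps_X) * (1 - fps_X ^ 2) ^ 2)"
    by (rule fps_inverse_triangular[symmetric])
  finally show ?thesis .
qed

end
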